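(* Assume (i) the subpolynomial prime gap hypothesis: for every real $\delta>0$ there exists $x_0$ such that for every natural number $x\ge x_0$ there is a prime $p$ with $x-x^{\delta}<p\le x$; and (ii) the Sidon upper bound hypothesis: for every real $\varepsilon>0$ there exist $C\ge0$ and $N_0\in\mathbb{N}$ with $h(N)\le\sqrt{N}+CN^{\varepsilon}$ for all $N\ge N_0$. Then for every real $\varepsilon>0$ there exist $C\ge0$ and $N_0\in\mathbb{N}$ such that $|h(N)-\sqrt{N}|\le C N^{\varepsilon}$ for all $N\ge N_0$.
   Context: A finite set $A\subseteq\mathbb{Z}$ is Sidon if $a+b=c+d$ with $a,b,c,d\in A$ implies $\{a,b\}=\{c,d\}$ as unordered pairs. For a natural number $N$, $h(N)=\max\{|A| : A\subseteq\{1,\dots,N\},\ A\text{ Sidon}\}$. *)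

theory Defs
  imports "HOL-Analysis.Analysis" "HOL-Computational_Algebra.Primes"
begin

definition sidon :: "int set \<Rightarrow> bool" where
  "sidon A \<longleftrightarrow> finite A \<and>
     (\<forall>a\<in>A. \<forall>b\<in>A. \<forall>c\<in>A. \<forall>d\<in>A. a + b = c + d \<longrightarrow> {a, b} = {c, d})"

definition h :: "nat \<Rightarrow> nat" where
  "h N = Max {card A | A. A \<subseteq> {1..int N} \<and> sidon A}"

end

theory Submission
  imports Defs "HOL-Number_Theory.Number_Theory"
begin

text \<open>
  Only the lower bound \<open>h N \<ge> sqrt N - O(N\<^sup>\<epsilon>)\<close> needs proof. Ruzsa's construction gives
  a Sidon set of size \<open>p - 1\<close> in \<open>{1..p(p - 1)}\<close> for every prime \<open>p\<close>: for a primitive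
  root \<open>g\<close> modulo \<open>p\<close>, take the residues \<open>z\<^sub>i\<close> modulo \<open>p(p - 1)\<close> with \<open>z\<^sub>i \<equiv> i (mod p - 1)\<close>
  and \<open>z\<^sub>i \<equiv> g\<^sup>i (mod p)\<close>. A relation \<open>z\<^sub>a + z\<^sub>b = z\<^sub>c + z\<^sub>d\<close> gives \<open>g\<^sup>a + g\<^sup>b \<equiv> g\<^sup>c + g\<^sup>d\<close> and
  \<open>g\<^sup>a g\<^sup>b \<equiv> g\<^sup>c g\<^sup>d (mod p)\<close>, so \<open>{g\<^sup>a, g\<^sup>b} \<equiv> {g\<^sup>c, g\<^sup>d}\<close> as roots of the same quadratic
  over \<open>\<int>/p\<close>, and \<open>i \<mapsto> g\<^sup>i\<close> is injective on \<open>{0..<p - 1}\<close>. The gap hypothesis supplies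
  a prime \<open>p > sqrt N - N\<^sup>\<epsilon> - 1\<close> with \<open>p\<^sup>2 \<le> N\<close>.
\<close>

lemma card_le_h:
  assumes "A \<subseteq> {1..int N}" "sidon A"
  shows "card A \<le> h N"
proof -
  have "{card A | A. A \<subseteq> {1..int N} \<and> sidon A} \<subseteq> {..N}"
    using card_mono[of "{1..int N}"] by fastforce
  then have "finite {card A | A. A \<subseteq> {1..int N} \<and> sidon A}"
    using finite_subset by blast
  then show ?thesis
    unfolding h_def using assms by (intro Max_ge) auto
qed

lemma sidon_image:
  assumes "finite I"
    and "\<And>a b c d. \<lbrakk>a \<in> I; b \<in> I; c \<in> I; d \<in> I; f a + f b = f c + f d\<rbrakk>
           \<Longrightarrow> (a = c \<and> b = d) \<or> (a = d \<and> b = c)"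
  shows "sidon (f ` I)"
  unfolding sidon_def using assms by (fastforce simp: insert_commute)

lemma cong_pair_of_sum_prod:
  fixes p u v s t :: int
  assumes "prime p" and sum: "[u + v = s + t] (mod p)" and prod: "[u * v = s * t] (mod p)"
  shows "[u = s] (mod p) \<and> [v = t] (mod p) \<or> [u = t] (mod p) \<and> [v = s] (mod p)"
proof -
  have sum_dvd: "p dvd (u + v) - (s + t)" and "p dvd u * v - s * t"
    using sum prod by (simp_all add: cong_iff_dvd_diff)
  moreover have "(s - u) * (u - t) = (u * v - s * t) - u * ((u + v) - (s + t))"
    by (simp add: algebra_simps)
  ultimately have "p dvd (s - u) * (u - t)"
    by simp
  then have "p dvd u - s \<or> p dvd u - t"
    using \<open>prime p\<close> prime_dvd_mult_iff dvd_minus_iff minus_diff_eq by metis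
  moreover have "v - t = ((u + v) - (s + t)) - (u - s)" "v - s = ((u + v) - (s + t)) - (u - t)"
    by simp_all
  ultimately show ?thesis
    using sum_dvd unfolding cong_iff_dvd_diff by (metis dvd_diff)
qed

lemma cong_sums_transfer:
  assumes "[x1 = y1] (mod m)" "[x2 = y2] (mod m)" "[x3 = y3] (mod m)" "[x4 = y4] (mod m)"
    and "[x1 + x2 = x3 + x4] (mod m)"
  shows "[y1 + y2 = y3 + y4] (mod m)"
proof -
  have "[y1 + y2 = x1 + x2] (mod m)"
    using cong_add[OF assms(1,2)] by (rule cong_sym)
  also have "[x1 + x2 = x3 + x4] (mod m)"
    by (fact assms(5))
  also have "[x3 + x4 = y3 + y4] (mod m)"
    using assms(3,4) by (rule cong_add)
  finally show ?thesis .
qed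

lemma primroot_pow_cong_imp_eq:
  fixes p g a c :: nat
  assumes "prime p" "residue_primroot p g" "a < p - 1" "c < p - 1"
    and "[int (g ^ a) = int (g ^ c)] (mod int p)"
  shows "a = c"
proof -
  have "coprime p g" "ord p g = p - 1"
    using assms(1,2) by (auto simp: residue_primroot_def totient_prime)
  have "[g ^ a = g ^ c] (mod p)"
    using assms(5) by (simp only: cong_int_iff)
  then have "g ^ a mod p = g ^ c mod p"
    unfolding cong_def .
  from inj_onD[OF inj_power_mod[OF \<open>coprime p g\<close>] this] show ?thesis
    using assms(3,4) \<open>ord p g = p - 1\<close> by simp
qed

text \<open>
  By the Chinese remainder theorem \<open>ruzsa_lift p g i\<close> is \<open>i\<close> modulo \<open>p - 1\<close> and \<open>g\<^sup>i\<close>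
  modulo \<open>p\<close>; \<open>ruzsa_elem\<close> is its representative in \<open>{1..p(p - 1)}\<close>.
\<close>

definition ruzsa_lift :: "nat \<Rightarrow> nat \<Rightarrow> nat \<Rightarrow> int" where
  "ruzsa_lift p g i = int i * int p + (int p - 1) * (int p - int (g ^ i))"

definition ruzsa_elem :: "nat \<Rightarrow> nat \<Rightarrow> nat \<Rightarrow> int" where
  "ruzsa_elem p g i = (ruzsa_lift p g i - 1) mod (int p * (int p - 1)) + 1"

definition ruzsa_set :: "nat \<Rightarrow> nat \<Rightarrow> int set" where
  "ruzsa_set p g = ruzsa_elem p g ` {..<p - 1}"

lemma ruzsa_lift_cong_index: "[ruzsa_lift p g i = int i] (mod int p - 1)"
proof -
  have "ruzsa_lift p g i - int i = (int p - 1) * (int i + int p - int (g ^ i))"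
    unfolding ruzsa_lift_def by (simp add: algebra_simps)
  then show ?thesis
    by (simp add: cong_iff_dvd_diff)
qed

lemma ruzsa_lift_cong_power: "[ruzsa_lift p g i = int (g ^ i)] (mod int p)"
proof -
  have "ruzsa_lift p g i - int (g ^ i) = int p * (int i + int p - 1 - int (g ^ i))"
    unfolding ruzsa_lift_def by (simp add: algebra_simps)
  then show ?thesis
    by (simp add: cong_iff_dvd_diff)
qed

lemma ruzsa_elem_cong_lift: "[ruzsa_elem p g i = ruzsa_lift p g i] (mod int p * (int p - 1))"
  unfolding ruzsa_elem_def cong_def by (simp add: mod_add_left_eq)

lemma ruzsa_elem_bounds:
  assumes "p \<ge> 2"
  shows "ruzsa_elem p g i \<in> {1..int p * (int p - 1)}"
proof -
  let ?M = "int p * (int p - 1)"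
  have "?M > 0"
    using assms by simp
  then have "0 \<le> (ruzsa_lift p g i - 1) mod ?M" "(ruzsa_lift p g i - 1) mod ?M < ?M"
    by simp_all
  then show ?thesis
    unfolding ruzsa_elem_def by simp
qed

lemma ruzsa_lift_sums_unique:
  assumes p: "prime p" and g: "residue_primroot p g"
    and abcd: "a < p - 1" "b < p - 1" "c < p - 1" "d < p - 1"
    and sum: "[ruzsa_lift p g a + ruzsa_lift p g b = ruzsa_lift p g c + ruzsa_lift p g d]
                (mod int p * (int p - 1))"
  shows "(a = c \<and> b = d) \<or> (a = d \<and> b = c)"
proof -
  let ?L = "ruzsa_lift p g" and ?G = "\<lambda>i. int (g ^ i)"
  have "coprime p g" "ord p g = p - 1"
    using p g by (auto simp: residue_primroot_def totient_prime)
  have "[?L a + ?L b = ?L c + ?L d] (mod (int p - 1) * int p)"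
    using sum by (simp only: mult.commute)
  then have "[?L a + ?L b = ?L c + ?L d] (mod int p - 1)"
    by (rule cong_modulus_mult)
  then have "[int a + int b = int c + int d] (mod int p - 1)"
    by (rule cong_sums_transfer[OF ruzsa_lift_cong_index ruzsa_lift_cong_index
          ruzsa_lift_cong_index ruzsa_lift_cong_index])
  moreover have "int (p - 1) = int p - 1"
    using prime_ge_1_nat[OF p] by simp
  ultimately have "[int (a + b) = int (c + d)] (mod int (p - 1))"
    by (simp only: of_nat_add)
  then have "[a + b = c + d] (mod p - 1)"
    by (simp only: cong_int_iff)
  then have "[g ^ (a + b) = g ^ (c + d)] (mod p)"
    using order_divides_expdiff[OF \<open>coprime p g\<close>] \<open>ord p g = p - 1\<close> by simp
  then have prod: "[?G a * ?G b = ?G c * ?G d] (mod int p)"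
    by (simp flip: cong_int_iff add: power_add)
  have "[?L a + ?L b = ?L c + ?L d] (mod int p)"
    using sum by (rule cong_modulus_mult)
  then have "[?G a + ?G b = ?G c + ?G d] (mod int p)"
    by (rule cong_sums_transfer[OF ruzsa_lift_cong_power ruzsa_lift_cong_power
          ruzsa_lift_cong_power ruzsa_lift_cong_power])
  with prod p have "[?G a = ?G c] (mod int p) \<and> [?G b = ?G d] (mod int p)
                    \<or> [?G a = ?G d] (mod int p) \<and> [?G b = ?G c] (mod int p)"
    by (intro cong_pair_of_sum_prod) simp_all
  then show ?thesis
    using primroot_pow_cong_imp_eq[OF p g] abcd by blast
qed

lemma ruzsa_elem_sums_unique:
  assumes "prime p" "residue_primroot p g" "a < p - 1" "b < p - 1" "c < p - 1" "d < p - 1"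
    and "ruzsa_elem p g a + ruzsa_elem p g b = ruzsa_elem p g c + ruzsa_elem p g d"
  shows "(a = c \<and> b = d) \<or> (a = d \<and> b = c)"
  using assms(7) by (intro ruzsa_lift_sums_unique[OF assms(1-6)] cong_sums_transfer[OF
      ruzsa_elem_cong_lift ruzsa_elem_cong_lift ruzsa_elem_cong_lift ruzsa_elem_cong_lift]) simp

lemma sidon_ruzsa_set:
  assumes "prime p" "residue_primroot p g"
  shows "sidon (ruzsa_set p g)"
  unfolding ruzsa_set_def
  using ruzsa_elem_sums_unique[OF assms] by (intro sidon_image) auto

lemma card_ruzsa_set:
  assumes "prime p" "residue_primroot p g"
  shows "card (ruzsa_set p g) = p - 1"
proof -
  have "i = j" if "i < p - 1" "j < p - 1" "ruzsa_elem p g i = ruzsa_elem p g j" for i j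
    using ruzsa_elem_sums_unique[OF assms that(1,1,2,2)] that(3) by simp
  then have "inj_on (ruzsa_elem p g) {..<p - 1}"
    by (intro inj_onI) simp
  then show ?thesis
    unfolding ruzsa_set_def by (simp add: card_image)
qed

lemma ruzsa_set_subset:
  assumes "p \<ge> 2"
  shows "ruzsa_set p g \<subseteq> {1..int p * (int p - 1)}"
  unfolding ruzsa_set_def using ruzsa_elem_bounds[OF assms] by blast

lemma h_ge_prime_minus_one:
  assumes "prime p" "p * (p - 1) \<le> N"
  shows "p - 1 \<le> h N"
proof -
  obtain g where g: "residue_primroot p g"
    using prime_primitive_root_exists \<open>prime p\<close> prime_gt_1_nat by blast
  have "int p * (int p - 1) \<le> int N"
    using assms prime_ge_1_nat[of p] by (metis of_nat_1 of_nat_diff of_nat_mono of_nat_mult)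
  then have "ruzsa_set p g \<subseteq> {1..int N}"
    using ruzsa_set_subset[OF prime_ge_2_nat[OF \<open>prime p\<close>]] by fastforce
  then show ?thesis
    using card_le_h sidon_ruzsa_set card_ruzsa_set assms(1) g by metis
qed

lemma h_ge_prime_le_sqrt:
  assumes "prime p" "real p \<le> sqrt (real N)"
  shows "real p - 1 \<le> real (h N)"
proof -
  have "real p ^ 2 \<le> real N"
    using assms(2) by (metis of_nat_0_le_iff power_mono real_sqrt_pow2 real_sqrt_ge_zero)
  then have "p * (p - 1) \<le> N"
    by (metis diff_le_self mult_le_mono2 of_nat_le_iff of_nat_power power2_eq_square le_trans)
  then have "real (p - 1) \<le> real (h N)"
    using h_ge_prime_minus_one[OF assms(1)] by simp
  then show ?thesis
    using prime_ge_1_nat[OF assms(1)] by (simp add: of_nat_diff)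
qed

lemma sqrt_minus_h_le_powr:
  fixes \<epsilon> :: real
  assumes "\<epsilon> > 0"
    and gap: "\<And>x. x \<ge> x0 \<Longrightarrow> \<exists>p. prime p \<and> real x - real x powr \<epsilon> < real p \<and> p \<le> x"
  shows "\<exists>N0. \<forall>N\<ge>N0. sqrt (real N) - real (h N) \<le> 3 * real N powr \<epsilon>"
proof (intro exI allI impI)
  fix N assume "N \<ge> max (x0 ^ 2) 1"
  define x where "x = nat \<lfloor>sqrt (real N)\<rfloor>"
  have "sqrt (real N) \<ge> 0"
    by simp
  then have x_le: "real x \<le> sqrt (real N)" and x_gt: "sqrt (real N) - 1 < real x"
    unfolding x_def by linarith+
  have "real x0 \<le> sqrt (real N)"
    using \<open>N \<ge> max (x0 ^ 2) 1\<close> by (simp add: real_le_rsqrt)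
  then have "x \<ge> x0"
    unfolding x_def by (simp add: le_nat_floor)
  then obtain p where p: "prime p" "real x - real x powr \<epsilon> < real p" "p \<le> x"
    using gap by blast
  have "real N * 1 \<le> real N * real N"
    using \<open>N \<ge> max (x0 ^ 2) 1\<close> by (intro mult_left_mono) auto
  then have "sqrt (real N) \<le> real N"
    by (intro real_le_lsqrt) (simp_all add: power2_eq_square)
  then have "real x powr \<epsilon> \<le> real N powr \<epsilon>"
    using x_le \<open>\<epsilon> > 0\<close> by (intro powr_mono2) linarith+
  have "1 \<le> real N powr \<epsilon>"
    using \<open>N \<ge> max (x0 ^ 2) 1\<close> \<open>\<epsilon> > 0\<close> by (intro ge_one_powr_ge_zero) auto
  have "real p \<le> real x"
    using p(3) by simp
  then have "real p - 1 \<le> real (h N)"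
    using x_le by (intro h_ge_prime_le_sqrt[OF p(1)]) linarith
  with p(2) x_gt \<open>real x powr \<epsilon> \<le> real N powr \<epsilon>\<close> \<open>1 \<le> real N powr \<epsilon>\<close>
  show "sqrt (real N) - real (h N) \<le> 3 * real N powr \<epsilon>"
    by linarith
qed

theorem mainTheorem15:
  assumes gap: "\<forall>\<delta>::real. \<delta> > 0 \<longrightarrow> (\<exists>x0::nat. \<forall>x::nat. x \<ge> x0 \<longrightarrow>
                   (\<exists>p::nat. prime p \<and> real x - real x powr \<delta> < real p \<and> p \<le> x))"
      and sidon_ub: "\<forall>\<epsilon>::real. \<epsilon> > 0 \<longrightarrow> (\<exists>C::real. \<exists>N0::nat. C \<ge> 0 \<and>
                   (\<forall>N::nat. N \<ge> N0 \<longrightarrow> real (h N) \<le> sqrt (real N) + C * real N powr \<epsilon>))"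
  shows "\<forall>\<epsilon>::real. \<epsilon> > 0 \<longrightarrow> (\<exists>C::real. \<exists>N0::nat. C \<ge> 0 \<and>
                   (\<forall>N::nat. N \<ge> N0 \<longrightarrow> \<bar>real (h N) - sqrt (real N)\<bar> \<le> C * real N powr \<epsilon>))"
proof (intro allI impI)
  fix \<epsilon> :: real assume "\<epsilon> > 0"
  obtain C N1 where "C \<ge> 0"
    and upper: "\<And>N. N \<ge> N1 \<Longrightarrow> real (h N) - sqrt (real N) \<le> C * real N powr \<epsilon>"
    using sidon_ub \<open>\<epsilon> > 0\<close> by fastforce
  obtain x0 where "\<And>x. x \<ge> x0 \<Longrightarrow> \<exists>p. prime p \<and> real x - real x powr \<epsilon> < real p \<and> p \<le> x"
    using gap \<open>\<epsilon> > 0\<close> by blast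
  then obtain N2 where lower: "\<And>N. N \<ge> N2 \<Longrightarrow> sqrt (real N) - real (h N) \<le> 3 * real N powr \<epsilon>"
    using sqrt_minus_h_le_powr \<open>\<epsilon> > 0\<close> by blast
  have "\<bar>real (h N) - sqrt (real N)\<bar> \<le> max C 3 * real N powr \<epsilon>" if "N \<ge> max N1 N2" for N
    using upper[of N] lower[of N] that
      mult_right_mono[of C "max C 3" "real N powr \<epsilon>"] mult_right_mono[of 3 "max C 3" "real N powr \<epsilon>"]
    by auto
  then show "\<exists>C. \<exists>N0. C \<ge> 0 \<and> (\<forall>N\<ge>N0. \<bar>real (h N) - sqrt (real N)\<bar> \<le> C * real N powr \<epsilon>)"
    by (metis max.cobounded2 order.trans zero_le_numeral)
qed

end
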